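(* Let $(A,P)$ be a complete filtered Rota--Baxter algebra of weight zero over a field $\mathbb{K}$ of characteristic zero, and let $a\in A_1$. Let $\chi_0:A_1\to A_1$ be the weight zero BCH-recursion, i.e. the map determined by $$\chi_0(a)=-\frac{\mathrm{ad}\,P(\chi_0(a))}{1-e^{\mathrm{ad}\,P(\chi_0(a))}}(a)=\sum_{n\ge0}\frac{B_n}{n!}\big(\mathrm{ad}\,P(\chi_0(a))\big)^n(a),$$ where $B_n$ are the Bernoulli numbers ($B_0=1$, $B_1=-1/2$, $B_2=1/6,\dots$) and $\mathrm{ad}\,u(v)=uv-vu$. Then: (1) the equation $x=1-P(x\,a)$ has the unique solution $x=\exp\big(-P(\chi_0(a))\big)$; (2) the equation $y=1+P(a\,y)$ has the unique solution $y=\exp\big(P(\chi_0(a))\big)$.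
   Context: A Rota--Baxter algebra of weight zero is an associative algebra $A$ with a linear map $P$ satisfying $P(x)P(y)=P(xP(y))+P(P(x)y)$ for all $x,y\in A$. A complete filtered Rota--Baxter algebra is one with a decreasing filtration $A=A_0\supseteq A_1\supseteq\cdots$ by ideals $A_n$ with $P(A_n)\subseteq A_n$, $A_mA_n\subseteq A_{m+n}$, and $A\cong\varprojlim A/A_n$. The map $\chi_0$ is the unique map $A_1\to A_1$ satisfying the displayed equation (determined inductively with respect to the filtration). *)

theory Defs
  imports Complex_Main
begin

fun bernoulli :: "nat \<Rightarrow> rat" where
  "bernoulli n = (if n = 0 then 1 else
     - (\<Sum>k\<in>{..<n}. of_nat ((n + 1) choose k) * (if k < n then bernoulli k else 0)) / of_nat (n + 1))"

declare bernoulli.simps [simp del]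

definition is_algebra :: "('k::field \<Rightarrow> 'a::ring_1 \<Rightarrow> 'a) \<Rightarrow> bool" where
  "is_algebra smult \<longleftrightarrow>
     (\<forall>c x y. smult c (x + y) = smult c x + smult c y) \<and>
     (\<forall>c d x. smult (c + d) x = smult c x + smult d x) \<and>
     (\<forall>c d x. smult (c * d) x = smult c (smult d x)) \<and>
     (\<forall>x. smult 1 x = x) \<and>
     (\<forall>c x y. smult c (x * y) = smult c x * y) \<and>
     (\<forall>c x y. smult c (x * y) = x * smult c y)"

definition is_RB0 :: "('k::field \<Rightarrow> 'a::ring_1 \<Rightarrow> 'a) \<Rightarrow> ('a \<Rightarrow> 'a) \<Rightarrow> bool" where
  "is_RB0 smult P \<longleftrightarrow>
     (\<forall>x y. P (x + y) = P x + P y) \<and>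
     (\<forall>c x. P (smult c x) = smult c (P x)) \<and>
     (\<forall>x y. P x * P y = P (x * P y) + P (P x * y))"

definition filt_lim :: "(nat \<Rightarrow> 'a::ab_group_add set) \<Rightarrow> (nat \<Rightarrow> 'a) \<Rightarrow> 'a \<Rightarrow> bool" where
  "filt_lim F s l \<longleftrightarrow> (\<forall>k. \<exists>N. \<forall>m\<ge>N. s m - l \<in> F k)"

definition filt_cauchy :: "(nat \<Rightarrow> 'a::ab_group_add set) \<Rightarrow> (nat \<Rightarrow> 'a) \<Rightarrow> bool" where
  "filt_cauchy F s \<longleftrightarrow> (\<forall>k. \<exists>N. \<forall>m\<ge>N. \<forall>n\<ge>N. s m - s n \<in> F k)"

definition filt_sums :: "(nat \<Rightarrow> 'a::ab_group_add set) \<Rightarrow> (nat \<Rightarrow> 'a) \<Rightarrow> 'a \<Rightarrow> bool" where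
  "filt_sums F f l \<longleftrightarrow> filt_lim F (\<lambda>m. \<Sum>i<m. f i) l"

text \<open>A decreasing filtration by (two-sided, K-linear) ideals, stable under P,
  multiplicative, and complete and Hausdorff, i.e. A is isomorphic to the
  inverse limit of the A/A_n.\<close>

definition complete_filtered_RB0 ::
  "('k::field \<Rightarrow> 'a::ring_1 \<Rightarrow> 'a) \<Rightarrow> ('a \<Rightarrow> 'a) \<Rightarrow> (nat \<Rightarrow> 'a set) \<Rightarrow> bool" where
  "complete_filtered_RB0 smult P F \<longleftrightarrow>
     is_algebra smult \<and> is_RB0 smult P \<and>
     F 0 = UNIV \<and>
     (\<forall>n. F (Suc n) \<subseteq> F n) \<and>
     (\<forall>n. 0 \<in> F n \<and> (\<forall>x\<in>F n. \<forall>y\<in>F n. x + y \<in> F n \<and> x - y \<in> F n)) \<and>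
     (\<forall>n c. \<forall>x\<in>F n. smult c x \<in> F n) \<and>
     (\<forall>n. \<forall>x\<in>F n. \<forall>y. x * y \<in> F n \<and> y * x \<in> F n) \<and>
     (\<forall>n. P ` F n \<subseteq> F n) \<and>
     (\<forall>m n. \<forall>x\<in>F m. \<forall>y\<in>F n. x * y \<in> F (m + n)) \<and>
     (\<Inter>n. F n) = {0} \<and>
     (\<forall>s. filt_cauchy F s \<longrightarrow> (\<exists>l. filt_lim F s l))"

definition filt_exp :: "(nat \<Rightarrow> 'a::ring_1 set) \<Rightarrow> ('k::field_char_0 \<Rightarrow> 'a \<Rightarrow> 'a) \<Rightarrow> 'a \<Rightarrow> 'a" where
  "filt_exp F smult x = (THE l. filt_sums F (\<lambda>n. smult (inverse (fact n)) (x ^ n)) l)"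

definition ad :: "'a::ring \<Rightarrow> 'a \<Rightarrow> 'a" where
  "ad u v = u * v - v * u"

end

theory Submission
  imports Defs
begin

text \<open>
  Write W = P (chi0 a). In weight zero the Rota--Baxter identity expands powers of P c as
  (P c)^(n+1) = P (sum_k (P c)^k c (P c)^(n-k)); rewriting these sandwich sums through ad (P c)
  gives exp (P c) = 1 + P (G(c) * exp (P c)), where G = (e^(ad P c) - 1) / ad P c.
  For c = chi0 a the Bernoulli series defining chi0 says exactly that G(c) = a, because
  z / (e^z - 1) and (e^z - 1) / z are inverse power series; so y = exp W solves y = 1 + P (a y).
  Both equations are contractions for the filtration, hence have unique solutions. Finally the
  Rota--Baxter identity shows x y = 1 for the solution x of x = 1 - P (x a), and since exp W has
  the two-sided inverse exp (- W), this forces x = exp (- W).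
\<close>

section \<open>Combinatorial identities\<close>

lemma bernoulli_recursion:
  "(\<Sum>k\<le>n. of_nat (Suc n choose k) * bernoulli k) = (if n = 0 then 1 else 0)"
proof (cases n)
  case (Suc m)
  have "(\<Sum>k\<le>Suc m. of_nat (Suc (Suc m) choose k) * bernoulli k)
      = (\<Sum>k<Suc m. of_nat (Suc (Suc m) choose k) * bernoulli k) +
        of_nat (Suc (Suc m)) * bernoulli (Suc m)"
    by (simp add: lessThan_Suc_atMost[symmetric])
  also have "\<dots> = 0"
    by (subst (2) bernoulli.simps) (simp del: of_nat_Suc)
  finally show ?thesis using Suc by simp
qed (simp add: bernoulli.simps)

text \<open>Coefficientwise form of ((e^z - 1) / z) * (z / (e^z - 1)) = 1.\<close>

lemma bernoulli_exp_convolution: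
  "(\<Sum>i\<le>n. inverse (fact (Suc i)) * (bernoulli (n - i) / fact (n - i))) = (if n = 0 then 1 else 0)"
proof -
  have "(\<Sum>i\<le>n. inverse (fact (Suc i)) * (bernoulli (n - i) / fact (n - i)))
      = (\<Sum>k\<le>n. inverse (fact (Suc (n - k))) * (bernoulli k / fact k))"
    by (subst sum.atLeastAtMost_rev[of _ 0 n, simplified atLeast0AtMost]) (rule sum.cong, auto)
  also have "\<dots> = (\<Sum>k\<le>n. of_nat (Suc n choose k) * bernoulli k) / fact (Suc n)"
    unfolding sum_divide_distrib
  proof (rule sum.cong)
    fix k assume "k \<in> {..n}"
    then have "k \<le> Suc n" "Suc n - k = Suc (n - k)" by auto
    then show "inverse (fact (Suc (n - k))) * (bernoulli k / fact k)
        = of_nat (Suc n choose k) * bernoulli k / fact (Suc n)"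
      by (simp add: binomial_fact field_simps del: fact_Suc)
  qed simp
  finally show ?thesis by (simp add: bernoulli_recursion)
qed

lemma inverse_fact_binomial:
  assumes "i \<le> n"
  shows "(inverse (fact (Suc n)) * of_nat (Suc n choose Suc i) :: 'k::field_char_0)
    = inverse (fact (Suc i)) * inverse (fact (n - i))"
  using binomial_fact[of "Suc i" "Suc n", where 'a = 'k] assms
  by (simp add: field_simps del: fact_Suc)

definition sandwich :: "'a::ring_1 \<Rightarrow> 'a \<Rightarrow> nat \<Rightarrow> 'a" where
  "sandwich w c n = (\<Sum>k\<le>n. w ^ k * c * w ^ (n - k))"

lemma sandwich_0 [simp]: "sandwich w c 0 = c"
  by (simp add: sandwich_def)

lemma sandwich_Suc: "sandwich w c (Suc n) = w * sandwich w c n + c * w ^ Suc n"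
proof -
  have "sandwich w c (Suc n) = c * w ^ Suc n + (\<Sum>k\<le>n. w ^ Suc k * c * w ^ (Suc n - Suc k))"
    unfolding sandwich_def by (subst sum.atMost_Suc_shift) simp
  also have "(\<Sum>k\<le>n. w ^ Suc k * c * w ^ (Suc n - Suc k)) = w * sandwich w c n"
    unfolding sandwich_def by (simp add: sum_distrib_left mult.assoc)
  finally show ?thesis by (simp add: add.commute)
qed

lemma sandwich_ad:
  "sandwich w c n = (\<Sum>i\<le>n. of_nat (Suc n choose Suc i) * ((ad w ^^ i) c * w ^ (n - i)))"
proof (induction n)
  case (Suc n)
  define A where "A i = (ad w ^^ i) c" for i
  define g where "g i = A i * w ^ (Suc n - i)" for i
  have w_A: "w * (A i * w ^ (n - i)) = A (Suc i) * w ^ (n - i) + g i" if "i \<le> n" for i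
  proof -
    have "Suc n - i = Suc (n - i)" using that by auto
    then show ?thesis by (simp add: g_def A_def ad_def algebra_simps)
  qed
  have "w * (of_nat k * x) = of_nat k * (w * x)" for k x
    by (metis mult.assoc mult_of_nat_commute)
  then have "w * sandwich w c n = (\<Sum>i\<le>n. of_nat (Suc n choose Suc i) * (w * (A i * w ^ (n - i))))"
    unfolding Suc.IH A_def sum_distrib_left by (simp only:)
  also have "\<dots> = (\<Sum>i\<le>n. of_nat (Suc n choose Suc i) * (A (Suc i) * w ^ (n - i)))
      + (\<Sum>i\<le>n. of_nat (Suc n choose Suc i) * g i)"
    by (simp add: w_A distrib_left sum.distrib)
  finally have lhs: "sandwich w c (Suc n)
      = (\<Sum>i\<le>n. of_nat (Suc n choose Suc i) * (A (Suc i) * w ^ (n - i)))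
      + (\<Sum>i\<le>n. of_nat (Suc n choose Suc i) * g i) + c * w ^ Suc n"
    by (simp add: sandwich_Suc)
  have shifted: "(\<Sum>i\<le>Suc n. of_nat (Suc n choose i) * g i)
      = c * w ^ Suc n + (\<Sum>i\<le>n. of_nat (Suc n choose Suc i) * (A (Suc i) * w ^ (n - i)))"
    by (subst sum.atMost_Suc_shift) (simp add: g_def A_def)
  have unshifted: "(\<Sum>i\<le>Suc n. of_nat (Suc n choose Suc i) * g i)
      = (\<Sum>i\<le>n. of_nat (Suc n choose Suc i) * g i)"
    by (simp del: binomial_Suc_Suc add: binomial_eq_0)
  have "(\<Sum>i\<le>Suc n. of_nat (Suc (Suc n) choose Suc i) * ((ad w ^^ i) c * w ^ (Suc n - i)))
      = (\<Sum>i\<le>Suc n. of_nat (Suc n choose i) * g i) + (\<Sum>i\<le>Suc n. of_nat (Suc n choose Suc i) * g i)"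
    by (simp add: g_def A_def distrib_right sum.distrib)
  also have "\<dots> = sandwich w c (Suc n)"
    unfolding shifted unshifted lhs by (simp add: algebra_simps)
  finally show ?case by simp
qed simp

locale filtered_RB0_algebra =
  fixes sm :: "'k::field_char_0 \<Rightarrow> 'a::ring_1 \<Rightarrow> 'a" and P :: "'a \<Rightarrow> 'a" and F :: "nat \<Rightarrow> 'a set"
  assumes cfrb: "complete_filtered_RB0 sm P F"
begin

lemma is_algebra: "is_algebra sm" and is_RB0: "is_RB0 sm P"
  using cfrb unfolding complete_filtered_RB0_def by simp_all

lemma sm_add: "sm c (x + y) = sm c x + sm c y"
  and sm_add_scalar: "sm (c + d) x = sm c x + sm d x"
  and sm_mult_scalar: "sm (c * d) x = sm c (sm d x)"
  and sm_one: "sm 1 x = x"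
  and sm_mult_left: "sm c (x * y) = sm c x * y"
  and sm_mult_right: "sm c (x * y) = x * sm c y"
  using is_algebra unfolding is_algebra_def by blast+

lemma P_add: "P (x + y) = P x + P y"
  and P_sm: "P (sm c x) = sm c (P x)"
  and P_mult_P: "P x * P y = P (x * P y) + P (P x * y)"
  using is_RB0 unfolding is_RB0_def by blast+

lemma filtration:
  "F 0 = UNIV"
  "\<forall>n. F (Suc n) \<subseteq> F n"
  "\<forall>n. 0 \<in> F n \<and> (\<forall>x\<in>F n. \<forall>y\<in>F n. x + y \<in> F n \<and> x - y \<in> F n)"
  "\<forall>n c. \<forall>x\<in>F n. sm c x \<in> F n"
  "\<forall>n. \<forall>x\<in>F n. \<forall>y. x * y \<in> F n \<and> y * x \<in> F n"
  "\<forall>n. P ` F n \<subseteq> F n"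
  "\<forall>m n. \<forall>x\<in>F m. \<forall>y\<in>F n. x * y \<in> F (m + n)"
  "(\<Inter>n. F n) = {0}"
  "\<forall>s. filt_cauchy F s \<longrightarrow> (\<exists>l. filt_lim F s l)"
  using cfrb unfolding complete_filtered_RB0_def by - (elim conjE, assumption)+

lemma F_0: "F 0 = UNIV" using filtration(1) .
lemma F_Suc_subset: "F (Suc n) \<subseteq> F n" using filtration(2) by blast
lemma F_zero: "0 \<in> F n" using filtration(3) by blast
lemma F_add: "x \<in> F n \<Longrightarrow> y \<in> F n \<Longrightarrow> x + y \<in> F n" using filtration(3) by blast
lemma F_diff: "x \<in> F n \<Longrightarrow> y \<in> F n \<Longrightarrow> x - y \<in> F n" using filtration(3) by blast
lemma F_sm: "x \<in> F n \<Longrightarrow> sm c x \<in> F n" using filtration(4) by blast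
lemma F_ideal_right: "x \<in> F n \<Longrightarrow> x * y \<in> F n" using filtration(5) by blast
lemma F_ideal_left: "x \<in> F n \<Longrightarrow> y * x \<in> F n" using filtration(5) by blast
lemma F_P: "x \<in> F n \<Longrightarrow> P x \<in> F n" using filtration(6) by blast
lemma F_mult: "x \<in> F m \<Longrightarrow> y \<in> F n \<Longrightarrow> x * y \<in> F (m + n)" using filtration(7) by blast
lemma F_complete: "filt_cauchy F s \<Longrightarrow> \<exists>l. filt_lim F s l" using filtration(9) by blast

lemma eq_0_if_in_all_F: "(\<And>k. x \<in> F k) \<Longrightarrow> x = 0"
  using filtration(8) by blast

lemma F_antimono: "m \<le> n \<Longrightarrow> x \<in> F n \<Longrightarrow> x \<in> F m"
  using lift_Suc_antimono_le[of F, OF F_Suc_subset] by blast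

lemma F_uminus: "x \<in> F n \<Longrightarrow> - x \<in> F n"
  using F_diff[OF F_zero] by (metis diff_0)

lemma F_sum: "(\<And>i. i \<in> A \<Longrightarrow> f i \<in> F n) \<Longrightarrow> sum f A \<in> F n"
  by (induction A rule: infinite_finite_induct) (auto simp: F_zero F_add)

lemma F_power: "x \<in> F 1 \<Longrightarrow> x ^ n \<in> F n"
  by (induction n) (auto simp: F_0 dest: F_mult)

lemma sm_zero: "sm c 0 = 0"
  using sm_add[of c 0 0] by simp

lemma sm_zero_scalar: "sm 0 x = 0"
  using sm_add_scalar[of 0 0 x] by simp

lemma sm_uminus: "sm c (- x) = - sm c x"
  by (metis add.inverse_unique add.right_inverse sm_add sm_zero)

lemma sm_uminus_scalar: "sm (- c) x = - sm c x"
  by (metis add.inverse_unique add.right_inverse sm_add_scalar sm_zero_scalar)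

lemma sm_diff: "sm c (x - y) = sm c x - sm c y"
  using sm_add[of c x "- y"] by (simp add: sm_uminus)

lemma sm_sum: "sm c (sum f A) = (\<Sum>i\<in>A. sm c (f i))"
  by (induction A rule: infinite_finite_induct) (auto simp: sm_zero sm_add)

lemma sm_sum_scalar: "sm (sum g A) x = (\<Sum>i\<in>A. sm (g i) x)"
  by (induction A rule: infinite_finite_induct) (auto simp: sm_zero_scalar sm_add_scalar)

lemma sm_of_nat: "sm (of_nat n) x = of_nat n * x"
  by (induction n) (auto simp: sm_zero_scalar sm_add_scalar sm_one algebra_simps)

lemma sm_mult_sm: "sm c x * sm d y = sm (c * d) (x * y)"
  by (metis sm_mult_left sm_mult_right sm_mult_scalar)

lemma power_uminus_sm: "(- x) ^ n = sm ((- 1) ^ n) (x ^ n)"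
  by (induction n)
    (simp_all add: sm_one sm_mult_scalar sm_uminus_scalar sm_uminus sm_mult_right[symmetric])

subsection \<open>Series in the filtration topology\<close>

definition filt_null :: "(nat \<Rightarrow> 'a) \<Rightarrow> bool" where
  "filt_null f \<longleftrightarrow> (\<forall>k. \<exists>N. \<forall>n\<ge>N. f n \<in> F k)"

definition filt_suminf :: "(nat \<Rightarrow> 'a) \<Rightarrow> 'a" where
  "filt_suminf f = (THE l. filt_sums F f l)"

lemma filt_nullI: "(\<And>n. f n \<in> F n) \<Longrightarrow> filt_null f"
  unfolding filt_null_def using F_antimono by blast

lemma filt_lim_unique:
  assumes l: "filt_lim F s l" and l': "filt_lim F s l'"
  shows "l = l'"
proof -
  have "l' - l \<in> F k" for k
  proof -
    obtain N where N: "\<forall>m\<ge>N. s m - l \<in> F k" using l unfolding filt_lim_def by blast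
    obtain N' where N': "\<forall>m\<ge>N'. s m - l' \<in> F k" using l' unfolding filt_lim_def by blast
    show ?thesis using F_diff[of "s (max N N') - l" k "s (max N N') - l'"] N N' by simp
  qed
  then show ?thesis using eq_0_if_in_all_F[of "l' - l"] by simp
qed

lemma filt_sums_unique: "filt_sums F f l \<Longrightarrow> filt_sums F f l' \<Longrightarrow> l = l'"
  unfolding filt_sums_def by (rule filt_lim_unique)

lemma filt_suminf_eqI: "filt_sums F f l \<Longrightarrow> filt_suminf f = l"
  unfolding filt_suminf_def using filt_sums_unique by blast

lemma partial_sum_diff:
  fixes f :: "nat \<Rightarrow> 'b::ab_group_add"
  shows "n \<le> m \<Longrightarrow> (\<Sum>i<m. f i) - (\<Sum>i<n. f i) = sum f {n..<m}"
  by (simp add: sum_diff_nat_ivl[of 0 n m f, symmetric] atLeast0LessThan)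

lemma filt_null_sums:
  assumes "filt_null f" shows "filt_sums F f (filt_suminf f)"
proof -
  have "filt_cauchy F (\<lambda>m. \<Sum>i<m. f i)"
    unfolding filt_cauchy_def
  proof
    fix k
    obtain N where N: "\<forall>n\<ge>N. f n \<in> F k" using assms unfolding filt_null_def by blast
    have tail: "(\<Sum>i<m. f i) - (\<Sum>i<n. f i) \<in> F k" if "N \<le> n" "n \<le> m" for m n
      using N that by (simp add: partial_sum_diff) (rule F_sum, simp)
    have "(\<Sum>i<m. f i) - (\<Sum>i<n. f i) \<in> F k" if "N \<le> m" "N \<le> n" for m n
      using tail[of n m] tail[of m n] F_uminus that by (cases "n \<le> m") force+
    then show "\<exists>N. \<forall>m\<ge>N. \<forall>n\<ge>N. (\<Sum>i<m. f i) - (\<Sum>i<n. f i) \<in> F k" by blast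
  qed
  then obtain l where "filt_sums F f l" using F_complete unfolding filt_sums_def by blast
  then show ?thesis using filt_suminf_eqI by simp
qed

lemma filt_sums_tail:
  assumes "filt_sums F f l" and "\<And>i. N \<le> i \<Longrightarrow> f i \<in> F k"
  shows "l - (\<Sum>i<N. f i) \<in> F k"
proof -
  obtain M where M: "\<forall>m\<ge>M. (\<Sum>i<m. f i) - l \<in> F k"
    using assms(1) unfolding filt_sums_def filt_lim_def by blast
  define m where "m = max M N"
  have "(\<Sum>i<m. f i) - (\<Sum>i<N. f i) \<in> F k"
    using assms(2) by (simp add: m_def partial_sum_diff) (rule F_sum, simp)
  moreover have "(\<Sum>i<m. f i) - l \<in> F k" using M m_def by simp
  ultimately show ?thesis using F_diff by fastforce
qed

lemma filt_sums_in_F: "filt_sums F f l \<Longrightarrow> (\<And>i. f i \<in> F k) \<Longrightarrow> l \<in> F k"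
  using filt_sums_tail[of f l 0 k] by simp

lemma filt_sums_Suc:
  assumes "filt_sums F f l"
  shows "filt_sums F (\<lambda>n. f (Suc n)) (l - f 0)"
proof -
  have "(\<Sum>i<m. f (Suc i)) - (l - f 0) = (\<Sum>i<Suc m. f i) - l" for m
    unfolding sum.lessThan_Suc_shift by simp
  with assms show ?thesis unfolding filt_sums_def filt_lim_def by (metis le_SucI)
qed

lemma filt_sums_delta: "filt_sums F (\<lambda>n. if n = 0 then x else 0) x"
  unfolding filt_sums_def filt_lim_def
proof
  fix k
  show "\<exists>N::nat. \<forall>m\<ge>N. (\<Sum>i<m. if i = 0 then x else 0) - x \<in> F k"
    by (intro exI[of _ 1] allI impI) (simp add: F_zero)
qed

definition filt_linear :: "('a \<Rightarrow> 'a) \<Rightarrow> bool" where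
  "filt_linear T \<longleftrightarrow> (\<forall>x y. T (x + y) = T x + T y) \<and> (\<forall>c x. T (sm c x) = sm c (T x)) \<and>
     (\<forall>k x. x \<in> F k \<longrightarrow> T x \<in> F k)"

lemma filt_linearD:
  assumes "filt_linear T"
  shows filt_linear_add: "T (x + y) = T x + T y"
    and filt_linear_sm: "T (sm c x) = sm c (T x)"
    and filt_linear_F: "x \<in> F k \<Longrightarrow> T x \<in> F k"
  using assms unfolding filt_linear_def by blast+

lemma filt_linear_diff: "filt_linear T \<Longrightarrow> T (x - y) = T x - T y"
  by (metis add_diff_cancel diff_add_cancel filt_linear_add)

lemma filt_linear_zero: "filt_linear T \<Longrightarrow> T 0 = 0"
  using filt_linear_diff[of T 0 0] by simp

lemma filt_linear_sum: "filt_linear T \<Longrightarrow> T (sum f A) = (\<Sum>i\<in>A. T (f i))"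
  by (induction A rule: infinite_finite_induct) (auto simp: filt_linear_add filt_linear_zero)

lemma filt_linear_sums:
  assumes T: "filt_linear T" and f: "filt_sums F f l"
  shows "filt_sums F (\<lambda>n. T (f n)) (T l)"
  using f filt_linear_F[OF T] unfolding filt_sums_def filt_lim_def
  by (simp add: filt_linear_diff[OF T, symmetric] filt_linear_sum[OF T, symmetric]) blast

lemma filt_suminf_linear:
  "filt_linear T \<Longrightarrow> filt_null f \<Longrightarrow> filt_suminf (\<lambda>n. T (f n)) = T (filt_suminf f)"
  using filt_linear_sums filt_null_sums filt_suminf_eqI by blast

lemma filt_linear_comp: "filt_linear S \<Longrightarrow> filt_linear T \<Longrightarrow> filt_linear (\<lambda>x. S (T x))"
  unfolding filt_linear_def by simp

lemma filt_linear_funpow: "filt_linear T \<Longrightarrow> filt_linear (T ^^ n)"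
  by (induction n) (auto simp: filt_linear_def)

lemma filt_linear_scale: "filt_linear (sm c)"
  unfolding filt_linear_def by (simp add: sm_add F_sm flip: sm_mult_scalar mult.commute)

lemma filt_linear_mult_left: "filt_linear (\<lambda>y. x * y)"
  unfolding filt_linear_def by (simp add: distrib_left F_ideal_left flip: sm_mult_right)

lemma filt_linear_mult_right: "filt_linear (\<lambda>y. y * x)"
  unfolding filt_linear_def by (simp add: distrib_right F_ideal_right flip: sm_mult_left)

lemma filt_linear_P: "filt_linear P"
  unfolding filt_linear_def by (simp add: P_add P_sm F_P)

lemmas P_diff = filt_linear_diff[OF filt_linear_P]

lemma filt_linear_ad: "filt_linear (ad w)"
  unfolding filt_linear_def ad_def
  by (simp add: algebra_simps sm_diff F_diff F_ideal_left F_ideal_right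
      flip: sm_mult_left sm_mult_right)

lemma filt_suminf_double:
  assumes h: "\<And>i j. h i j \<in> F (i + j)"
  shows "filt_suminf (\<lambda>i. filt_suminf (h i)) = filt_suminf (\<lambda>n. \<Sum>i\<le>n. h i (n - i))"
proof -
  define H where "H i = filt_suminf (h i)" for i
  define D where "D n = (\<Sum>i\<le>n. h i (n - i))" for n
  have h_sums: "filt_sums F (h i) (H i)" for i
    unfolding H_def by (rule filt_null_sums, rule filt_nullI, rule F_antimono[OF le_add2 h])
  have H_F: "H i \<in> F i" for i
    by (rule filt_sums_in_F[OF h_sums], rule F_antimono[OF le_add1 h])
  have D_F: "D n \<in> F n" for n
    unfolding D_def by (rule F_sum) (metis h le_add_diff_inverse atMost_iff)
  have H_sums: "filt_sums F H (filt_suminf H)" by (rule filt_null_sums, rule filt_nullI, rule H_F)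
  have D_sums: "filt_sums F D (filt_suminf D)" by (rule filt_null_sums, rule filt_nullI, rule D_F)
  have "filt_suminf H - filt_suminf D \<in> F K" for K
  proof -
    have H_tail: "filt_suminf H - (\<Sum>i<K. H i) \<in> F K"
      by (rule filt_sums_tail[OF H_sums], rule F_antimono[OF _ H_F])
    have D_tail: "filt_suminf D - (\<Sum>n<K. D n) \<in> F K"
      by (rule filt_sums_tail[OF D_sums], rule F_antimono[OF _ D_F])
    have "H i - (\<Sum>j<K - i. h i j) \<in> F K" if "i < K" for i
      by (rule filt_sums_tail[OF h_sums], rule F_antimono[OF _ h]) (use that in linarith)
    then have truncation: "(\<Sum>i<K. H i) - (\<Sum>i<K. \<Sum>j<K - i. h i j) \<in> F K"
      unfolding sum_subtractf[symmetric] by (rule F_sum) simp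
    have "(\<Sum>i<K. \<Sum>j<K - i. h i j) = (\<Sum>(i, j)\<in>{(i, j). i + j < K}. h i j)"
      by (subst sum.Sigma) (auto intro: sum.cong)
    also have "\<dots> = (\<Sum>n<K. D n)" unfolding D_def by (rule sum.triangle_reindex)
    finally have "(\<Sum>i<K. \<Sum>j<K - i. h i j) = (\<Sum>n<K. D n)" .
    then have "(\<Sum>i<K. H i) - (\<Sum>n<K. D n) \<in> F K" using truncation by simp
    from F_diff[OF F_add[OF H_tail this] D_tail] show ?thesis by simp
  qed
  then show ?thesis using eq_0_if_in_all_F[of "filt_suminf H - filt_suminf D"]
    unfolding H_def D_def by simp
qed

lemma filt_suminf_mult:
  assumes f: "\<And>i. f i \<in> F i" and g: "\<And>j. g j \<in> F j"
  shows "filt_suminf f * filt_suminf g = filt_suminf (\<lambda>n. \<Sum>i\<le>n. f i * g (n - i))"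
proof -
  have "filt_suminf f * filt_suminf g = filt_suminf (\<lambda>i. f i * filt_suminf g)"
    using filt_suminf_linear[OF filt_linear_mult_right filt_nullI[OF f]] by simp
  also have "\<dots> = filt_suminf (\<lambda>i. filt_suminf (\<lambda>j. f i * g j))"
    using filt_suminf_linear[OF filt_linear_mult_left filt_nullI[OF g]] by simp
  also have "\<dots> = filt_suminf (\<lambda>n. \<Sum>i\<le>n. f i * g (n - i))"
    by (rule filt_suminf_double) (simp add: F_mult f g)
  finally show ?thesis .
qed

lemma funpow_in_F: "(\<And>k x. x \<in> F k \<Longrightarrow> D x \<in> F (Suc k)) \<Longrightarrow> (D ^^ n) v \<in> F n"
  by (induction n) (simp_all add: F_0)

lemma filt_suminf_compose:
  assumes D: "filt_linear D" and D_raises: "\<And>k x. x \<in> F k \<Longrightarrow> D x \<in> F (Suc k)"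
  shows "filt_suminf (\<lambda>i. sm (c i) ((D ^^ i) (filt_suminf (\<lambda>n. sm (b n) ((D ^^ n) v)))))
       = filt_suminf (\<lambda>n. sm (\<Sum>i\<le>n. c i * b (n - i)) ((D ^^ n) v))"
proof -
  have D_power: "(D ^^ n) v \<in> F n" for n
    by (rule funpow_in_F[OF D_raises])
  have term_F: "sm (c i * b n) ((D ^^ (i + n)) v) \<in> F (i + n)" for i n
    by (rule F_sm, rule D_power)
  have "sm (c i) ((D ^^ i) (filt_suminf (\<lambda>n. sm (b n) ((D ^^ n) v))))
      = filt_suminf (\<lambda>n. sm (c i * b n) ((D ^^ (i + n)) v))" for i
  proof -
    have op: "filt_linear (\<lambda>x. sm (c i) ((D ^^ i) x))"
      by (rule filt_linear_comp[OF filt_linear_scale filt_linear_funpow[OF D]])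
    have "filt_null (\<lambda>n. sm (b n) ((D ^^ n) v))"
      by (rule filt_nullI, rule F_sm, rule D_power)
    from filt_suminf_linear[OF op this, symmetric] show ?thesis
      by (simp add: filt_linear_sm[OF filt_linear_funpow[OF D]] sm_mult_scalar funpow_add)
  qed
  then have "filt_suminf (\<lambda>i. sm (c i) ((D ^^ i) (filt_suminf (\<lambda>n. sm (b n) ((D ^^ n) v)))))
      = filt_suminf (\<lambda>i. filt_suminf (\<lambda>n. sm (c i * b n) ((D ^^ (i + n)) v)))"
    by simp
  also have "\<dots> = filt_suminf (\<lambda>n. \<Sum>i\<le>n. sm (c i * b (n - i)) ((D ^^ (i + (n - i))) v))"
    by (rule filt_suminf_double, rule term_F)
  also have "\<dots> = filt_suminf (\<lambda>n. sm (\<Sum>i\<le>n. c i * b (n - i)) ((D ^^ n) v))"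
    by (simp add: sm_sum_scalar)
  finally show ?thesis .
qed

subsection \<open>Fixed points of contractions\<close>

definition filt_contraction :: "('a \<Rightarrow> 'a) \<Rightarrow> bool" where
  "filt_contraction T \<longleftrightarrow> (\<forall>k x y. x - y \<in> F k \<longrightarrow> T x - T y \<in> F (Suc k))"

lemma filt_contraction_fixpoint_unique:
  assumes T: "filt_contraction T" and x: "T x = x" and y: "T y = y"
  shows "x = y"
proof -
  have "x - y \<in> F k" for k
  proof (induction k)
    case 0
    show ?case by (simp add: F_0)
  next
    case (Suc k)
    show ?case using T[unfolded filt_contraction_def, rule_format, OF Suc.IH] x y by simp
  qed
  then show ?thesis using eq_0_if_in_all_F[of "x - y"] by simp
qed

lemma filt_contraction_fixpoint_exists:
  assumes T: "filt_contraction T"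
  shows "\<exists>x. T x = x"
proof -
  define s where "s n = (T ^^ n) 0" for n
  have step: "s (Suc n) - s n \<in> F n" for n
    by (induction n) (use T in \<open>auto simp: s_def F_0 filt_contraction_def\<close>)
  have "filt_sums F (\<lambda>n. s (Suc n) - s n) (filt_suminf (\<lambda>n. s (Suc n) - s n))"
    by (rule filt_null_sums, rule filt_nullI, rule step)
  moreover have "s 0 = 0" by (simp add: s_def)
  ultimately obtain x where lim: "filt_lim F s x"
    unfolding filt_sums_def sum_lessThan_telescope by auto
  have "filt_lim F s (T x)"
    unfolding filt_lim_def
  proof
    fix k
    obtain N where N: "\<forall>m\<ge>N. s m - x \<in> F k" using lim unfolding filt_lim_def by blast
    have "s (Suc m) - T x \<in> F k" if "N \<le> m" for m
      using T N that unfolding filt_contraction_def s_def by (auto intro: F_antimono[OF le_SucI])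
    then show "\<exists>N. \<forall>m\<ge>N. s m - T x \<in> F k"
      by (metis Suc_le_D Suc_le_mono)
  qed
  then have "x = T x" by (rule filt_lim_unique[OF lim])
  then show ?thesis by metis
qed

subsection \<open>Exponentials\<close>

lemma ad_raises_F: "w \<in> F 1 \<Longrightarrow> x \<in> F k \<Longrightarrow> ad w x \<in> F (Suc k)"
  unfolding ad_def using F_mult[of w 1 x k] F_mult[of x k w 1] by (simp add: F_diff)

lemma sandwich_in_F: "w \<in> F 1 \<Longrightarrow> sandwich w c n \<in> F n"
  unfolding sandwich_def
proof (rule F_sum)
  fix k assume w: "w \<in> F 1" and "k \<in> {..n}"
  then have "k + (n - k) = n" by simp
  moreover have "w ^ k * c * w ^ (n - k) \<in> F (k + (n - k))"
    by (intro F_mult F_ideal_right F_power w)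
  ultimately show "w ^ k * c * w ^ (n - k) \<in> F n" by simp
qed

lemma P_sandwich: "P (sandwich (P c) c n) = P c ^ Suc n"
proof (induction n)
  case (Suc n)
  have "P c ^ Suc (Suc n) = P c * P (sandwich (P c) c n)" using Suc by simp
  also have "\<dots> = P (c * P (sandwich (P c) c n)) + P (P c * sandwich (P c) c n)"
    by (rule P_mult_P)
  also have "\<dots> = P (sandwich (P c) c (Suc n))"
    by (simp only: Suc sandwich_Suc P_add add.commute)
  finally show ?case by simp
qed simp

lemma filt_exp_eq: "filt_exp F sm w = filt_suminf (\<lambda>n. sm (inverse (fact n)) (w ^ n))"
  unfolding filt_exp_def filt_suminf_def ..

lemma exp_term_in_F: "w \<in> F 1 \<Longrightarrow> sm (inverse (fact n)) (w ^ n) \<in> F n"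
  by (intro F_sm F_power)

lemma filt_exp_P_sandwich:
  assumes c: "c \<in> F 1"
  shows "filt_exp F sm (P c)
    = 1 + P (filt_suminf (\<lambda>n. sm (inverse (fact (Suc n))) (sandwich (P c) c n)))"
proof -
  define e where "e n = sm (inverse (fact n)) (P c ^ n)" for n
  define q where "q n = sm (inverse (fact (Suc n))) (sandwich (P c) c n)" for n
  have Pc: "P c \<in> F 1" by (rule F_P[OF c])
  have "filt_sums F e (filt_suminf e)"
    unfolding e_def by (rule filt_null_sums, rule filt_nullI, rule exp_term_in_F[OF Pc])
  from filt_sums_Suc[OF this] have "filt_suminf (\<lambda>n. e (Suc n)) = filt_suminf e - 1"
    by (simp add: filt_suminf_eqI e_def sm_one)
  moreover have "e (Suc n) = P (q n)" for n
    by (simp add: e_def q_def P_sm P_sandwich)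
  moreover have "filt_suminf (\<lambda>n. P (q n)) = P (filt_suminf q)"
    unfolding q_def by (rule filt_suminf_linear[OF filt_linear_P], rule filt_nullI, rule F_sm,
      rule sandwich_in_F[OF Pc])
  ultimately have "filt_suminf e = 1 + P (filt_suminf q)" by (simp add: algebra_simps)
  then show ?thesis unfolding filt_exp_eq e_def q_def .
qed

lemma sandwich_series:
  assumes w: "w \<in> F 1"
  shows "filt_suminf (\<lambda>n. sm (inverse (fact (Suc n))) (sandwich w c n))
    = filt_suminf (\<lambda>i. sm (inverse (fact (Suc i))) ((ad w ^^ i) c)) * filt_exp F sm w"
proof -
  define g where "g i = sm (inverse (fact (Suc i))) ((ad w ^^ i) c)" for i
  define e where "e n = sm (inverse (fact n)) (w ^ n)" for n
  have "sm (inverse (fact (Suc n))) (sandwich w c n) = (\<Sum>i\<le>n. g i * e (n - i))" for n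
  proof -
    have "sm (inverse (fact (Suc n))) (sandwich w c n) = (\<Sum>i\<le>n.
        sm (inverse (fact (Suc n)) * of_nat (Suc n choose Suc i)) ((ad w ^^ i) c * w ^ (n - i)))"
      by (simp only: sandwich_ad sm_sum sm_of_nat[symmetric] sm_mult_scalar[symmetric])
    also have "\<dots> = (\<Sum>i\<le>n. g i * e (n - i))"
    proof (rule sum.cong)
      fix i assume "i \<in> {..n}"
      then show "sm (inverse (fact (Suc n)) * of_nat (Suc n choose Suc i))
          ((ad w ^^ i) c * w ^ (n - i)) = g i * e (n - i)"
        unfolding g_def e_def sm_mult_sm by (simp only: inverse_fact_binomial atMost_iff)
    qed simp
    finally show ?thesis .
  qed
  moreover have "filt_suminf g * filt_suminf e = filt_suminf (\<lambda>n. \<Sum>i\<le>n. g i * e (n - i))"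
    unfolding g_def e_def
    by (rule filt_suminf_mult, rule F_sm, rule funpow_in_F, erule ad_raises_F[OF w],
      rule exp_term_in_F[OF w])
  ultimately show ?thesis unfolding filt_exp_eq g_def e_def by simp
qed

lemma filt_exp_P:
  assumes c: "c \<in> F 1"
  shows "filt_exp F sm (P c)
    = 1 + P (filt_suminf (\<lambda>i. sm (inverse (fact (Suc i))) ((ad (P c) ^^ i) c))
        * filt_exp F sm (P c))"
  using filt_exp_P_sandwich[OF c] unfolding sandwich_series[OF F_P[OF c]] .

lemma filt_exp_uminus_mult:
  assumes w: "w \<in> F 1"
  shows "filt_exp F sm (- w) * filt_exp F sm w = 1"
proof -
  have product_term: "sm (inverse (fact i)) ((- w) ^ i) * sm (inverse (fact (n - i))) (w ^ (n - i))
      = sm ((- 1) ^ i * of_nat (n choose i) / fact n) (w ^ n)" if "i \<le> n" for i n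
  proof -
    have "w ^ i * w ^ (n - i) = w ^ n" using that by (simp flip: power_add)
    moreover have "inverse (fact i) * (- 1) ^ i * inverse (fact (n - i))
        = ((- 1) ^ i * of_nat (n choose i) / fact n :: 'k)"
      using that by (simp add: binomial_fact field_simps)
    ultimately show ?thesis
      by (simp only: power_uminus_sm sm_mult_scalar[symmetric] sm_mult_sm)
  qed
  have "(\<Sum>i\<le>n. sm (inverse (fact i)) ((- w) ^ i) * sm (inverse (fact (n - i))) (w ^ (n - i)))
      = (if n = 0 then 1 else 0)" for n
  proof -
    have "(\<Sum>i\<le>n. sm (inverse (fact i)) ((- w) ^ i) * sm (inverse (fact (n - i))) (w ^ (n - i)))
        = sm ((\<Sum>i\<le>n. (- 1) ^ i * of_nat (n choose i)) / fact n) (w ^ n)"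
      by (simp add: product_term sum_divide_distrib sm_sum_scalar)
    then show ?thesis
      by (cases "n = 0") (simp_all add: sm_one choose_alternating_sum sm_zero_scalar)
  qed
  moreover have "filt_exp F sm (- w) * filt_exp F sm w
      = filt_suminf (\<lambda>n. \<Sum>i\<le>n.
          sm (inverse (fact i)) ((- w) ^ i) * sm (inverse (fact (n - i))) (w ^ (n - i)))"
    unfolding filt_exp_eq
    by (rule filt_suminf_mult, rule exp_term_in_F[OF F_uminus[OF w]], rule exp_term_in_F[OF w])
  ultimately show ?thesis using filt_suminf_eqI[OF filt_sums_delta] by simp
qed

lemma bch_series_inverse:
  assumes chi: "chi \<in> F 1"
    and chi_sums: "filt_sums F (\<lambda>n. sm (of_rat (bernoulli n / fact n)) ((ad (P chi) ^^ n) a)) chi"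
  shows "filt_suminf (\<lambda>i. sm (inverse (fact (Suc i))) ((ad (P chi) ^^ i) chi)) = a"
proof -
  define D where "D = ad (P chi)"
  have D: "filt_linear D" and D_raises: "x \<in> F k \<Longrightarrow> D x \<in> F (Suc k)" for x k
    unfolding D_def by (rule filt_linear_ad, rule ad_raises_F[OF F_P[OF chi]])
  have coeff: "(\<Sum>i\<le>n. inverse (fact (Suc i)) * of_rat (bernoulli (n - i) / fact (n - i)) :: 'k)
      = (if n = 0 then 1 else 0)" for n
  proof -
    have of_rat_fact: "of_rat (fact m) = (fact m :: 'k)" for m
      by (metis of_nat_fact of_rat_of_nat_eq)
    have "(\<Sum>i\<le>n. inverse (fact (Suc i)) * of_rat (bernoulli (n - i) / fact (n - i)) :: 'k)
        = of_rat (\<Sum>i\<le>n. inverse (fact (Suc i)) * (bernoulli (n - i) / fact (n - i)))"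
      by (simp only: of_rat_sum of_rat_mult of_rat_inverse of_rat_fact)
    then show ?thesis unfolding bernoulli_exp_convolution by simp
  qed
  have "filt_suminf (\<lambda>i. sm (inverse (fact (Suc i))) ((D ^^ i) chi))
      = filt_suminf (\<lambda>i. sm (inverse (fact (Suc i))) ((D ^^ i)
          (filt_suminf (\<lambda>n. sm (of_rat (bernoulli n / fact n)) ((D ^^ n) a)))))"
    using filt_suminf_eqI[OF chi_sums] unfolding D_def by simp
  also have "\<dots> = filt_suminf (\<lambda>n. sm (\<Sum>i\<le>n. inverse (fact (Suc i)) *
      of_rat (bernoulli (n - i) / fact (n - i))) ((D ^^ n) a))"
    by (rule filt_suminf_compose[OF D D_raises])
  also have "\<dots> = filt_suminf (\<lambda>n. sm (if n = 0 then 1 else 0) ((D ^^ n) a))"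
    unfolding coeff ..
  also have "\<dots> = filt_suminf (\<lambda>n. if n = 0 then a else 0)"
    by (rule arg_cong[where f = filt_suminf]) (simp add: fun_eq_iff sm_one sm_zero_scalar)
  also have "\<dots> = a" by (rule filt_suminf_eqI[OF filt_sums_delta])
  finally show ?thesis unfolding D_def .
qed

subsection \<open>The two fixed-point equations\<close>

lemma filt_contraction_right:
  assumes a: "a \<in> F 1"
  shows "filt_contraction (\<lambda>x. b - P (x * a))"
  unfolding filt_contraction_def
proof (intro allI impI)
  fix k x y assume "x - y \<in> F k"
  then have "P ((y - x) * a) \<in> F (k + 1)"
    using F_uminus F_mult[OF _ a] F_P by fastforce
  moreover have "(b - P (x * a)) - (b - P (y * a)) = P ((y - x) * a)"
    by (simp add: P_diff left_diff_distrib)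
  ultimately show "(b - P (x * a)) - (b - P (y * a)) \<in> F (Suc k)" by simp
qed

lemma filt_contraction_left:
  assumes a: "a \<in> F 1"
  shows "filt_contraction (\<lambda>y. b + P (a * y))"
  unfolding filt_contraction_def
proof (intro allI impI)
  fix k x y assume "x - y \<in> F k"
  then have "P (a * (x - y)) \<in> F (1 + k)"
    using F_mult[OF a] F_P by blast
  moreover have "(b + P (a * x)) - (b + P (a * y)) = P (a * (x - y))"
    by (simp add: P_diff right_diff_distrib)
  ultimately show "(b + P (a * x)) - (b + P (a * y)) \<in> F (Suc k)" by simp
qed

lemma RB_solutions_mult:
  assumes x: "x = 1 - P (x * a)" and y: "y = 1 + P (a * y)"
  shows "x * y = 1"
proof -
  have Px: "P (x * a) = 1 - x" using arg_cong[OF x, of "\<lambda>t. 1 - t"] by simp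
  have Py: "P (a * y) = y - 1" using arg_cong[OF y, of "\<lambda>t. t - 1"] by simp
  have "(1 - x) * (y - 1) = P (x * a) * P (a * y)" by (simp only: Px Py)
  also have "\<dots> = P (x * a * P (a * y)) + P (P (x * a) * (a * y))" by (rule P_mult_P)
  also have "\<dots> = P (x * a * (y - 1)) + P ((1 - x) * (a * y))" by (simp only: Px Py)
  also have "\<dots> = P (a * y) - P (x * a)" by (simp add: algebra_simps P_add P_diff)
  also have "\<dots> = (y - 1) - (1 - x)" by (simp only: Px Py)
  finally show ?thesis by (simp add: algebra_simps flip: one_add_one)
qed

end

theorem lemma2p15:
  fixes smult :: "'k::field_char_0 \<Rightarrow> 'a::ring_1 \<Rightarrow> 'a"
    and P :: "'a \<Rightarrow> 'a" and F :: "nat \<Rightarrow> 'a set"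
    and chi0 :: "'a \<Rightarrow> 'a" and a :: 'a
  assumes RB: "complete_filtered_RB0 smult P F"
    and chi0_maps: "\<forall>b\<in>F 1. chi0 b \<in> F 1"
    and chi0_eq: "\<forall>b\<in>F 1. filt_sums F
        (\<lambda>n. smult (of_rat (bernoulli n / fact n)) ((ad (P (chi0 b)) ^^ n) b)) (chi0 b)"
    and a: "a \<in> F 1"
  shows "(\<forall>x. x = 1 - P (x * a) \<longleftrightarrow> x = filt_exp F smult (- P (chi0 a))) \<and>
         (\<forall>y. y = 1 + P (a * y) \<longleftrightarrow> y = filt_exp F smult (P (chi0 a)))"
proof -
  interpret filtered_RB0_algebra smult P F by (rule filtered_RB0_algebra.intro[OF RB])
  define W where "W = P (chi0 a)"
  have chi: "chi0 a \<in> F 1" using chi0_maps a by blast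
  have W: "W \<in> F 1" unfolding W_def by (rule F_P[OF chi])
  have y: "filt_exp F smult W = 1 + P (a * filt_exp F smult W)"
    using filt_exp_P[OF chi] bch_series_inverse[OF chi chi0_eq[rule_format, OF a]]
    unfolding W_def by simp
  obtain x where x: "x = 1 - P (x * a)"
    using filt_contraction_fixpoint_exists[OF filt_contraction_right[OF a]] by metis
  have "x = x * (filt_exp F smult W * filt_exp F smult (- W))"
    using filt_exp_uminus_mult[OF F_uminus[OF W]] by simp
  also have "\<dots> = filt_exp F smult (- W)"
    by (simp add: RB_solutions_mult[OF x y] flip: mult.assoc)
  finally have x_exp: "x = filt_exp F smult (- W)" .
  show ?thesis
    using filt_contraction_fixpoint_unique[OF filt_contraction_right[OF a]]
      filt_contraction_fixpoint_unique[OF filt_contraction_left[OF a]] x x_exp y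
    unfolding W_def by metis
qed

end
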